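(* Let $\Delta\geq3$ be an integer and $(\beta,\gamma)$ antiferromagnetic, $\lambda>0$, with $(\beta,\gamma,\lambda)\neq(\beta,\beta,1)$. Suppose there exists a pair of field gadgets $\mathcal{T}_1,\mathcal{T}_2$ of maximum degree $\Delta$ with $R_{\mathcal{T}_1}=R_{\mathcal{T}_2}$ but $M_{\mathcal{T}_1}\neq M_{\mathcal{T}_2}$. Then one can construct, for $j=0,1,2,\dots$, an infinite sequence of pairs of field gadgets $\mathcal{T}_{1,j},\mathcal{T}_{2,j}$ of maximum degree $\Delta$ with effective fields $R_{1,j},R_{2,j}$ and magnetization gaps $M_{1,j},M_{2,j}$ such that $R_{1,j}=R_{2,j}$ and $M_{1,j}\neq M_{2,j}$ for every $j$, and moreover the values $R_{1,j}$, $j\geq0$, are pairwise distinct.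
   Context: A pair $(\beta,\gamma)$ with $\beta,\gamma\geq0$ is antiferromagnetic if $\beta\gamma\in[0,1)$ and at least one is nonzero. For a graph $G=(V,E)$ and $\lambda>0$, $\mu_{G;\beta,\gamma,\lambda}(\sigma)=\lambda^{|\sigma|}\beta^{m_0(\sigma)}\gamma^{m_1(\sigma)}/Z$ for $\sigma:V\to\{0,1\}$, $|\sigma|=\sum_v\sigma(v)$, $m_0,m_1$ the numbers of edges with both endpoints spin $0$, resp. spin $1$, convention $0^0=1$. A field gadget is a rooted tree $\mathcal{T}$ whose root $\rho$ has degree one; in the special case $\lambda=\frac{1-\beta}{1-\gamma}$ with $\beta\neq\gamma$, a field gadget is such a rooted tree in which in addition a triangle is attached on a subset of the leaves. With $\mu=\mu_{\mathcal{T};\beta,\gamma,\lambda}$, the effective field is $R_{\mathcal{T}}=\frac{1}{\lambda}\frac{\mu(\sigma(\rho)=1)}{\mu(\sigma(\rho)=0)}$ and the magnetization gap is $M_{\mathcal{T}}=\mathbf{E}_\mu[|\sigma|\mid\sigma(\rho)=1]-\mathbf{E}_\mu[|\sigma|\mid\sigma(\rho)=0]$. *)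

theory Defs
  imports Complex_Main
begin

type_synonym graph = "nat set \<times> nat set set"
type_synonym rgraph = "nat set \<times> nat set set \<times> nat"

definition simple_graph :: "nat set \<Rightarrow> nat set set \<Rightarrow> bool" where
  "simple_graph V E \<longleftrightarrow> finite V \<and> (\<forall>e\<in>E. e \<subseteq> V \<and> card e = 2)"

definition adj :: "nat set set \<Rightarrow> nat \<Rightarrow> nat \<Rightarrow> bool" where
  "adj E u v \<longleftrightarrow> {u, v} \<in> E"

definition degree :: "nat set set \<Rightarrow> nat \<Rightarrow> nat" where
  "degree E v = card {e \<in> E. v \<in> e}"

definition max_degree_le :: "nat set \<Rightarrow> nat set set \<Rightarrow> nat \<Rightarrow> bool" where
  "max_degree_le V E D \<longleftrightarrow> (\<forall>v\<in>V. degree E v \<le> D)"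

definition connected_graph :: "nat set \<Rightarrow> nat set set \<Rightarrow> bool" where
  "connected_graph V E \<longleftrightarrow> (\<forall>u\<in>V. \<forall>v\<in>V. (adj E)\<^sup>*\<^sup>* u v)"

definition has_cycle :: "nat set \<Rightarrow> nat set set \<Rightarrow> bool" where
  "has_cycle V E \<longleftrightarrow> (\<exists>xs. length xs \<ge> 3 \<and> distinct xs \<and> set xs \<subseteq> V \<and>
      (\<forall>i<length xs. adj E (xs ! i) (xs ! ((i + 1) mod length xs))))"

definition is_tree :: "nat set \<Rightarrow> nat set set \<Rightarrow> bool" where
  "is_tree V E \<longleftrightarrow> simple_graph V E \<and> V \<noteq> {} \<and> connected_graph V E \<and> \<not> has_cycle V E"

definition root_deg1_tree :: "nat set \<Rightarrow> nat set set \<Rightarrow> nat \<Rightarrow> bool" where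
  "root_deg1_tree V E r \<longleftrightarrow> is_tree V E \<and> r \<in> V \<and> degree E r = 1"

definition tree_with_triangles ::
  "nat set \<Rightarrow> nat set set \<Rightarrow> nat \<Rightarrow> nat set \<Rightarrow> nat set set \<Rightarrow> bool" where
  "tree_with_triangles V' E' r V E \<longleftrightarrow> root_deg1_tree V E r \<and>
     (\<exists>L a b. L \<subseteq> {l \<in> V. degree E l = 1 \<and> l \<noteq> r} \<and>
        inj_on a L \<and> inj_on b L \<and> a ` L \<inter> V = {} \<and> b ` L \<inter> V = {} \<and> a ` L \<inter> b ` L = {} \<and>
        V' = V \<union> a ` L \<union> b ` L \<and>
        E' = E \<union> (\<Union>l\<in>L. {{l, a l}, {l, b l}, {a l, b l}}))"

definition antiferromagnetic :: "real \<Rightarrow> real \<Rightarrow> bool" where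
  "antiferromagnetic \<beta> \<gamma> \<longleftrightarrow> \<beta> \<ge> 0 \<and> \<gamma> \<ge> 0 \<and> 0 \<le> \<beta> * \<gamma> \<and> \<beta> * \<gamma> < 1 \<and> (\<beta> \<noteq> 0 \<or> \<gamma> \<noteq> 0)"

definition field_gadget :: "real \<Rightarrow> real \<Rightarrow> real \<Rightarrow> rgraph \<Rightarrow> bool" where
  "field_gadget \<beta> \<gamma> lam T = (case T of (V, E, r) \<Rightarrow>
     (if lam = (1 - \<beta>) / (1 - \<gamma>) \<and> \<beta> \<noteq> \<gamma>
      then (\<exists>V0 E0. tree_with_triangles V E r V0 E0)
      else root_deg1_tree V E r))"

text \<open>A configuration \<sigma> : V \<rightarrow> {0,1} is identified with the set S = \<sigma>^{-1}(1) \<subseteq> V.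
  Its weight is lam^|S| \<beta>^{m_0} \<gamma>^{m_1} (with 0^0 = 1).\<close>
definition m0 :: "nat set set \<Rightarrow> nat set \<Rightarrow> nat" where
  "m0 E S = card {e \<in> E. e \<inter> S = {}}"

definition m1 :: "nat set set \<Rightarrow> nat set \<Rightarrow> nat" where
  "m1 E S = card {e \<in> E. e \<subseteq> S}"

definition weight :: "real \<Rightarrow> real \<Rightarrow> real \<Rightarrow> nat set set \<Rightarrow> nat set \<Rightarrow> real" where
  "weight \<beta> \<gamma> lam E S = lam ^ card S * \<beta> ^ m0 E S * \<gamma> ^ m1 E S"

definition Zpart :: "real \<Rightarrow> real \<Rightarrow> real \<Rightarrow> nat set \<Rightarrow> nat set set \<Rightarrow> real" where
  "Zpart \<beta> \<gamma> lam V E = (\<Sum>S\<in>Pow V. weight \<beta> \<gamma> lam E S)"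

definition gibbs_prob ::
  "real \<Rightarrow> real \<Rightarrow> real \<Rightarrow> nat set \<Rightarrow> nat set set \<Rightarrow> (nat set \<Rightarrow> bool) \<Rightarrow> real" where
  "gibbs_prob \<beta> \<gamma> lam V E P =
     (\<Sum>S\<in>{S \<in> Pow V. P S}. weight \<beta> \<gamma> lam E S) / Zpart \<beta> \<gamma> lam V E"

definition gibbs_cond_exp ::
  "real \<Rightarrow> real \<Rightarrow> real \<Rightarrow> nat set \<Rightarrow> nat set set \<Rightarrow> (nat set \<Rightarrow> real) \<Rightarrow> (nat set \<Rightarrow> bool) \<Rightarrow> real" where
  "gibbs_cond_exp \<beta> \<gamma> lam V E f P =
     (\<Sum>S\<in>{S \<in> Pow V. P S}. f S * (weight \<beta> \<gamma> lam E S / Zpart \<beta> \<gamma> lam V E))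
       / gibbs_prob \<beta> \<gamma> lam V E P"

definition eff_field :: "real \<Rightarrow> real \<Rightarrow> real \<Rightarrow> rgraph \<Rightarrow> real" where
  "eff_field \<beta> \<gamma> lam T = (case T of (V, E, r) \<Rightarrow>
     (1 / lam) * (gibbs_prob \<beta> \<gamma> lam V E (\<lambda>S. r \<in> S) / gibbs_prob \<beta> \<gamma> lam V E (\<lambda>S. r \<notin> S)))"

definition mag_gap :: "real \<Rightarrow> real \<Rightarrow> real \<Rightarrow> rgraph \<Rightarrow> real" where
  "mag_gap \<beta> \<gamma> lam T = (case T of (V, E, r) \<Rightarrow>
     gibbs_cond_exp \<beta> \<gamma> lam V E (\<lambda>S. real (card S)) (\<lambda>S. r \<in> S)
     - gibbs_cond_exp \<beta> \<gamma> lam V E (\<lambda>S. real (card S)) (\<lambda>S. r \<notin> S))"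

definition gadget_max_degree_le :: "rgraph \<Rightarrow> nat \<Rightarrow> bool" where
  "gadget_max_degree_le T D = (case T of (V, E, r) \<Rightarrow> max_degree_le V E D)"

end

theory Submission
  imports Defs
begin

text \<open>For a rooted graph let \<open>Z\<^sup>+, Z\<^sup>-\<close> be the partition functions with the root fixed to
  spin 1 resp. 0, and \<open>N\<^sup>+, N\<^sup>-\<close> the same sums weighted by the number of 1-spins, so that
  \<open>R = Z\<^sup>+ / (\<lambda> Z\<^sup>-)\<close> and \<open>M = N\<^sup>+/Z\<^sup>+ - N\<^sup>-/Z\<^sup>-\<close>. Gluing a fixed rooted graph to the
  root by an edge maps \<open>(Z\<^sup>+, Z\<^sup>-)\<close> by an invertible \<open>2 \<times> 2\<close> matrix and \<open>(N\<^sup>+, N\<^sup>-)\<close>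
  affinely, and such an update preserves "equal fields, different gaps". Putting a new root
  above the old one changes the field by the decreasing Moebius map
  \<open>f(x) = (\<gamma>\<lambda>x + 1) / (\<lambda>x + \<beta>)\<close>, so iterating it twice from a field that is not a fixed point
  of \<open>f\<close> gives a strictly monotone, hence injective, sequence of fields. If the given field is
  the fixed point of \<open>f\<close>, a pendant branch attached between two new roots first multiplies it
  by a factor \<open>c \<noteq> 1\<close>, which moves it off the fixed point.\<close>

lemma sum_Pow_Un_disjoint:
  assumes "V \<inter> W = {}"
  shows "(\<Sum>S\<in>Pow (V \<union> W). G (S \<inter> V) (S \<inter> W)) = (\<Sum>A\<in>Pow V. \<Sum>B\<in>Pow W. G A B)"
proof -
  have "(\<Sum>A\<in>Pow V. \<Sum>B\<in>Pow W. G A B) = (\<Sum>(A, B)\<in>Pow V \<times> Pow W. G A B)"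
    by (rule sum.cartesian_product)
  also have "\<dots> = (\<Sum>S\<in>Pow (V \<union> W). G (S \<inter> V) (S \<inter> W))"
    by (rule sum.reindex_bij_witness[of _ "\<lambda>S. (S \<inter> V, S \<inter> W)" "\<lambda>(A, B). A \<union> B"])
      (use assms in \<open>auto intro!: arg_cong2[where f = G]\<close>)
  finally show ?thesis ..
qed

lemma sum_Pow_insert:
  assumes "finite A" "a \<notin> A"
  shows "(\<Sum>S\<in>Pow (insert a A). f S) = (\<Sum>S\<in>Pow A. f S) + (\<Sum>S\<in>Pow A. f (insert a S))"
proof -
  have "inj_on (insert a) (Pow A)"
    using assms(2) unfolding inj_on_def by (meson PowD insert_ident subsetD)
  moreover have "Pow A \<inter> insert a ` Pow A = {}"
    using assms(2) by auto
  ultimately show ?thesis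
    using assms(1) by (simp add: Pow_insert sum.union_disjoint sum.reindex)
qed

lemma card_filter_insert:
  assumes "finite E" "e \<notin> E"
  shows "card {x \<in> insert e E. P x} = card {x \<in> E. P x} + (if P e then 1 else 0)"
proof -
  have "{x \<in> insert e E. P x} = (if P e then insert e {x \<in> E. P x} else {x \<in> E. P x})"
    by auto
  then show ?thesis
    using assms by simp
qed

lemma inj_iterates_strict_mono_on:
  fixes g :: "'a::linorder \<Rightarrow> 'a"
  assumes mono: "strict_mono_on A g" and closed: "g ` A \<subseteq> A" and x: "x \<in> A" and moves: "g x \<noteq> x"
  shows "inj (\<lambda>j. (g ^^ j) x)"
proof (rule linorder_inj_onI')
  have in_A: "(g ^^ j) x \<in> A" for j
    by (induction j) (use x closed in auto)
  have step: "(g ^^ j) x < (g ^^ Suc j) x" if "x < g x" for j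
  proof (induction j)
    case (Suc j)
    then show ?case
      using mono in_A[of j] in_A[of "Suc j"] by (simp add: strict_mono_on_def)
  qed (use that in simp)
  have step': "(g ^^ Suc j) x < (g ^^ j) x" if "g x < x" for j
  proof (induction j)
    case (Suc j)
    then show ?case
      using mono in_A[of j] in_A[of "Suc j"] by (simp add: strict_mono_on_def)
  qed (use that in simp)
  fix i j :: nat
  assume "i < j"
  consider "x < g x" | "g x < x"
    using moves by fastforce
  then show "(g ^^ i) x \<noteq> (g ^^ j) x"
  proof cases
    case 1
    then show ?thesis
      using lift_Suc_mono_less[of "\<lambda>j. (g ^^ j) x", OF step \<open>i < j\<close>] by simp
  next
    case 2
    have "(g ^^ j) x < (g ^^ i) x"
      using \<open>i < j\<close> by (induction rule: less_Suc_induct) (use step' 2 in \<open>auto intro: order.strict_trans\<close>)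
    then show ?thesis
      by simp
  qed
qed

lemma simple_graph_finite_edges: "simple_graph V E \<Longrightarrow> finite E"
  unfolding simple_graph_def by (meson Pow_iff finite_Pow_iff finite_subset subsetI)

lemma simple_graph_empty_notin: "simple_graph V E \<Longrightarrow> {} \<notin> E"
  unfolding simple_graph_def by fastforce

lemma degree_insert_new_edge:
  assumes "finite E" "e \<notin> E"
  shows "degree (insert e E) w = degree E w + (if w \<in> e then 1 else 0)"
  unfolding degree_def using card_filter_insert[OF assms] by simp

lemma degree_Un_disjoint:
  assumes "finite A" "finite B" "A \<inter> B = {}"
  shows "degree (A \<union> B) w = degree A w + degree B w"
proof -
  have "{e \<in> A \<union> B. w \<in> e} = {e \<in> A. w \<in> e} \<union> {e \<in> B. w \<in> e}"
    by auto
  then show ?thesis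
    unfolding degree_def using assms by (simp add: card_Un_disjoint disjoint_iff)
qed

lemma degree_outside: "simple_graph V E \<Longrightarrow> w \<notin> V \<Longrightarrow> degree E w = 0"
  unfolding degree_def simple_graph_def by (auto simp: card_eq_0_iff)

lemma simple_graphs_disjoint_edges:
  assumes "simple_graph V E" "simple_graph W F" "V \<inter> W = {}"
  shows "E \<inter> F = {}"
proof (rule ccontr)
  assume "E \<inter> F \<noteq> {}"
  then obtain e where "e \<in> E" "e \<in> F"
    by blast
  then have "e \<subseteq> V \<inter> W" "card e = 2"
    using assms(1,2) unfolding simple_graph_def by auto
  then show False
    using assms(3) by (metis card.empty subset_empty zero_neq_numeral)
qed

lemma degree_join:
  assumes V: "simple_graph V E" and W: "simple_graph W F" and disj: "V \<inter> W = {}"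
    and x: "x \<in> V" and y: "y \<in> W"
  shows "degree (insert {x, y} (E \<union> F)) w = degree E w + degree F w + (if w = x \<or> w = y then 1 else 0)"
proof -
  have EF: "finite E" "finite F"
    using V W by (auto intro: simple_graph_finite_edges)
  have "E \<inter> F = {}"
    using V W disj by (rule simple_graphs_disjoint_edges)
  moreover have "{x, y} \<notin> E \<union> F"
    using V W disj x y unfolding simple_graph_def by blast
  ultimately show ?thesis
    using EF by (simp add: degree_insert_new_edge degree_Un_disjoint)
qed

lemma connected_graph_pendant:
  assumes conn: "connected_graph V E" and x: "x \<in> V"
  shows "connected_graph (insert y V) (insert {x, y} E)"
  unfolding connected_graph_def
proof (intro ballI)
  let ?E = "insert {x, y} E"
  have lift: "(adj ?E)\<^sup>*\<^sup>* u v" if "(adj E)\<^sup>*\<^sup>* u v" for u v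
    using that by (rule rtranclp_mono[THEN predicate2D, rotated]) (auto simp: adj_def)
  have xy: "adj ?E x y" "adj ?E y x"
    unfolding adj_def by (auto simp: insert_commute)
  have from_x: "(adj ?E)\<^sup>*\<^sup>* x w" and to_x: "(adj ?E)\<^sup>*\<^sup>* w x" if "w \<in> insert y V" for w
    using that xy conn x lift unfolding connected_graph_def by auto
  fix u v
  assume "u \<in> insert y V" "v \<in> insert y V"
  then show "(adj ?E)\<^sup>*\<^sup>* u v"
    using to_x from_x by (meson rtranclp_trans)
qed

lemma cycle_pred_ne_succ:
  fixes i n :: nat
  assumes "i < n" "3 \<le> n"
  shows "(i + n - 1) mod n \<noteq> (i + 1) mod n"
proof -
  have pred: "(i + n - 1) mod n = (if i = 0 then n - 1 else i - 1)"
  proof (cases "i = 0")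
    case False
    then have "i + n - 1 = (i - 1) + n"
      by linarith
    then have "(i + n - 1) mod n = (i - 1) mod n"
      by simp
    then show ?thesis
      using False assms by simp
  qed (use assms in simp)
  have succ: "(i + 1) mod n = (if i + 1 = n then 0 else i + 1)"
    using assms by auto
  show ?thesis
    unfolding pred succ using assms by auto
qed

text \<open>On a cycle of length at least three every vertex has two distinct neighbours, while a
  pendant vertex has only one.\<close>

lemma cycle_avoids_pendant:
  assumes len: "3 \<le> length xs" and dis: "distinct xs"
    and ad: "\<forall>i<length xs. adj E (xs ! i) (xs ! ((i + 1) mod length xs))"
    and nbr: "\<And>z. adj E z y \<or> adj E y z \<Longrightarrow> z = x"
  shows "y \<notin> set xs"
proof
  let ?n = "length xs"
  assume "y \<in> set xs"
  then obtain i where i: "i < ?n" "xs ! i = y"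
    by (auto simp: in_set_conv_nth)
  define j where "j = (i + ?n - 1) mod ?n"
  have j: "j < ?n" and m: "(i + 1) mod ?n < ?n"
    using len unfolding j_def by (auto intro!: mod_less_divisor)
  have "i + ?n - 1 + 1 = i + ?n"
    using len by linarith
  then have "(j + 1) mod ?n = i"
    using i unfolding j_def by (metis mod_Suc_eq mod_add_self2 mod_less Suc_eq_plus1)
  then have "xs ! j = x" "xs ! ((i + 1) mod ?n) = x"
    using ad j i nbr by metis+
  then have "j = (i + 1) mod ?n"
    using nth_eq_iff_index_eq[OF dis j m] by simp
  then show False
    using cycle_pred_ne_succ[OF i(1) len] unfolding j_def by simp
qed

lemma has_cycle_pendant:
  assumes V: "simple_graph V E" and x: "x \<in> V" and y: "y \<notin> V"
    and cyc: "has_cycle (insert y V) (insert {x, y} E)"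
  shows "has_cycle V E"
proof -
  let ?E = "insert {x, y} E"
  obtain xs where len: "3 \<le> length xs" and dis: "distinct xs" and sub: "set xs \<subseteq> insert y V"
    and ad: "\<forall>i<length xs. adj ?E (xs ! i) (xs ! ((i + 1) mod length xs))"
    using cyc unfolding has_cycle_def by blast
  let ?n = "length xs"
  have "z = x" if "adj ?E z y \<or> adj ?E y z" for z
  proof -
    have "{z, y} \<notin> E"
      using V y unfolding simple_graph_def by auto
    then have "{z, y} = {x, y}"
      using that unfolding adj_def by (auto simp: insert_commute)
    then show ?thesis
      using x y by (auto simp: doubleton_eq_iff)
  qed
  then have y_off: "y \<notin> set xs"
    using len dis ad by (intro cycle_avoids_pendant)
  show ?thesis
    unfolding has_cycle_def
  proof (intro exI conjI allI impI)
    show "3 \<le> length xs" "distinct xs" "set xs \<subseteq> V"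
      using len dis sub y_off by auto
    fix i
    assume i: "i < length xs"
    have "(i + 1) mod ?n < ?n"
      using len by (auto intro!: mod_less_divisor)
    then have "xs ! i \<noteq> y" "xs ! ((i + 1) mod ?n) \<noteq> y"
      using y_off nth_mem[OF i] nth_mem by force+
    then show "adj E (xs ! i) (xs ! ((i + 1) mod ?n))"
      using ad i unfolding adj_def by (auto simp: doubleton_eq_iff)
  qed
qed

lemma is_tree_pendant:
  assumes t: "is_tree V E" and x: "x \<in> V" and y: "y \<notin> V"
  shows "is_tree (insert y V) (insert {x, y} E)"
proof -
  have V: "simple_graph V E"
    using t unfolding is_tree_def by simp
  have "simple_graph (insert y V) (insert {x, y} E)"
    using V x y unfolding simple_graph_def by (auto simp: card_insert_if)
  then show ?thesis
    using t x y has_cycle_pendant[OF V x y] connected_graph_pendant[of V E x y]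
    unfolding is_tree_def by blast
qed

definition fresh :: "nat set \<Rightarrow> nat \<Rightarrow> nat" where
  "fresh V k = Suc (Max (insert 0 V) + k)"

lemma fresh_notin: "finite V \<Longrightarrow> fresh V k \<notin> V"
  unfolding fresh_def using Max_ge[of "insert 0 V"] by fastforce

lemma fresh_eq_iff [simp]: "fresh V i = fresh V j \<longleftrightarrow> i = j"
  unfolding fresh_def by simp

fun rooted :: "rgraph \<Rightarrow> bool" where
  "rooted (V, E, r) \<longleftrightarrow> simple_graph V E \<and> r \<in> V"

fun root_degree :: "rgraph \<Rightarrow> nat" where
  "root_degree (V, E, r) = degree E r"

fun join :: "rgraph \<Rightarrow> rgraph \<Rightarrow> rgraph" where
  "join (V, E, x) (W, F, y) = (V \<union> W, insert {x, y} (E \<union> F), x)"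

definition triangle :: "nat \<Rightarrow> nat \<Rightarrow> nat \<Rightarrow> nat set set" where
  "triangle u p q = {{u, p}, {u, q}, {p, q}}"

fun new_root :: "rgraph \<Rightarrow> rgraph" where
  "new_root (V, E, r) = join ({fresh V 0}, {}, fresh V 0) (V, E, r)"

fun add_leaf :: "rgraph \<Rightarrow> rgraph" where
  "add_leaf (V, E, r) = join (V, E, r) ({fresh V 0}, {}, fresh V 0)"

fun add_triangle :: "rgraph \<Rightarrow> rgraph" where
  "add_triangle (V, E, r) =
    join (V, E, r) ({fresh V 0, fresh V 1, fresh V 2}, triangle (fresh V 0) (fresh V 1) (fresh V 2), fresh V 0)"

lemma rooted_join:
  assumes "rooted (V, E, x)" "rooted (W, F, y)" "V \<inter> W = {}"
  shows "rooted (join (V, E, x) (W, F, y))"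
proof -
  have "x \<noteq> y"
    using assms by auto
  then show ?thesis
    using assms by (auto simp: simple_graph_def)
qed

lemma rooted_leaf: "rooted ({n}, {}, n)"
  by (simp add: simple_graph_def)

lemma rooted_triangle: "distinct [u, p, q] \<Longrightarrow> rooted ({u, p, q}, triangle u p q, u)"
  by (simp add: triangle_def simple_graph_def)

lemma rooted_new_root:
  assumes "rooted T"
  shows "rooted (new_root T)"
proof (cases T)
  case (fields V E r)
  then have "finite V"
    using assms by (simp add: simple_graph_def)
  then show ?thesis
    using assms fields rooted_join[OF rooted_leaf[of "fresh V 0"], of V E r]
    by (simp add: fresh_notin)
qed

lemma max_degree_join:
  assumes V: "rooted (V, E, x)" and W: "rooted (W, F, y)" and disj: "V \<inter> W = {}"
    and DV: "gadget_max_degree_le (V, E, x) D" and DW: "gadget_max_degree_le (W, F, y) D"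
    and x: "root_degree (V, E, x) < D" and y: "root_degree (W, F, y) < D"
  shows "gadget_max_degree_le (join (V, E, x) (W, F, y)) D"
  unfolding gadget_max_degree_le_def max_degree_le_def join.simps prod.case
proof
  fix w
  assume w: "w \<in> V \<union> W"
  have deg: "degree (insert {x, y} (E \<union> F)) w = degree E w + degree F w + (if w = x \<or> w = y then 1 else 0)"
    using V W disj by (intro degree_join) auto
  show "degree (insert {x, y} (E \<union> F)) w \<le> D"
  proof (cases "w \<in> V")
    case True
    then have "degree F w = 0" "w \<noteq> y"
      using W disj by (auto intro: degree_outside)
    then show ?thesis
      using deg DV x True unfolding gadget_max_degree_le_def max_degree_le_def by auto
  next
    case False
    then have "degree E w = 0" "w \<noteq> x" "w \<in> W"
      using V w by (auto intro: degree_outside)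
    then show ?thesis
      using deg DW y unfolding gadget_max_degree_le_def max_degree_le_def by auto
  qed
qed

lemma root_degree_join:
  assumes V: "rooted (V, E, x)" and W: "rooted (W, F, y)" and "V \<inter> W = {}"
  shows "root_degree (join (V, E, x) (W, F, y)) = root_degree (V, E, x) + 1"
  using assms degree_join[of V E W F x y] degree_outside[of W F x] by auto

lemma degree_triangle:
  assumes "distinct [u, p, q]"
  shows "degree (triangle u p q) w = (if w \<in> {u, p, q} then 2 else 0)"
proof -
  have "{e \<in> triangle u p q. w \<in> e} =
      (if w = u then {{u, p}, {u, q}} else if w = p then {{u, p}, {p, q}}
       else if w = q then {{u, q}, {p, q}} else {})"
    unfolding triangle_def using assms by auto
  then show ?thesis
    unfolding degree_def using assms by (auto simp: doubleton_eq_iff)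
qed

lemma triangle_degrees:
  assumes "distinct [u, p, q]"
  shows "gadget_max_degree_le ({u, p, q}, triangle u p q, u) 2" "root_degree ({u, p, q}, triangle u p q, u) = 2"
  using assms by (simp_all add: gadget_max_degree_le_def max_degree_le_def degree_triangle)

section \<open>Trees with triangles attached to leaves\<close>

text \<open>The graphs of \<^const>\<open>tree_with_triangles\<close> without the condition that the root has
  degree one, which fails for the intermediate graphs of the construction.\<close>

definition triangle_tree :: "nat set \<Rightarrow> nat set set \<Rightarrow> nat \<Rightarrow> bool" where
  "triangle_tree V E r \<longleftrightarrow> (\<exists>V0 E0 L a b. is_tree V0 E0 \<and> r \<in> V0 \<and>
     L \<subseteq> {l \<in> V0. degree E0 l = 1 \<and> l \<noteq> r} \<and>
     inj_on a L \<and> inj_on b L \<and> a ` L \<inter> V0 = {} \<and> b ` L \<inter> V0 = {} \<and> a ` L \<inter> b ` L = {} \<and>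
     V = V0 \<union> a ` L \<union> b ` L \<and> E = E0 \<union> (\<Union>l\<in>L. triangle l (a l) (b l)))"

lemma attach_triangles:
  assumes t: "is_tree V0 E0" and r: "r \<in> V0" and L: "L \<subseteq> {l \<in> V0. degree E0 l = 1 \<and> l \<noteq> r}"
    and a: "a ` L \<inter> V0 = {}" and b: "b ` L \<inter> V0 = {}" and ab: "a ` L \<inter> b ` L = {}"
  shows "simple_graph (V0 \<union> a ` L \<union> b ` L) (E0 \<union> (\<Union>l\<in>L. triangle l (a l) (b l)))"
    and "degree (E0 \<union> (\<Union>l\<in>L. triangle l (a l) (b l))) r = degree E0 r"
proof -
  have s0: "simple_graph V0 E0"
    using t unfolding is_tree_def by simp
  have "L \<subseteq> V0"
    using L by auto
  then have fL: "finite L"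
    using s0 by (auto simp: simple_graph_def intro: finite_subset)
  have new: "l \<in> V0" "a l \<notin> V0" "b l \<notin> V0" "a l \<noteq> b l" if "l \<in> L" for l
    using that L a b ab by blast+
  have tri: "e \<subseteq> V0 \<union> a ` L \<union> b ` L \<and> card e = 2"
    if "l \<in> L" "e \<in> triangle l (a l) (b l)" for l e
  proof -
    have "l \<noteq> a l" "l \<noteq> b l" "a l \<noteq> b l"
      using new[OF that(1)] by auto
    then show ?thesis
      using that new[OF that(1)] unfolding triangle_def by auto
  qed
  show "simple_graph (V0 \<union> a ` L \<union> b ` L) (E0 \<union> (\<Union>l\<in>L. triangle l (a l) (b l)))"
  proof -
    have "finite (V0 \<union> a ` L \<union> b ` L)"
      using s0 fL unfolding simple_graph_def by simp
    moreover have "\<forall>e\<in>E0 \<union> (\<Union>l\<in>L. triangle l (a l) (b l)). e \<subseteq> V0 \<union> a ` L \<union> b ` L \<and> card e = 2"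
      using s0 tri unfolding simple_graph_def by blast
    ultimately show ?thesis
      unfolding simple_graph_def by blast
  qed
  have "r \<notin> e" if "l \<in> L" "e \<in> triangle l (a l) (b l)" for l e
    using that new[OF that(1)] r L unfolding triangle_def by auto
  then have "{e \<in> E0 \<union> (\<Union>l\<in>L. triangle l (a l) (b l)). r \<in> e} = {e \<in> E0. r \<in> e}"
    by blast
  then show "degree (E0 \<union> (\<Union>l\<in>L. triangle l (a l) (b l))) r = degree E0 r"
    unfolding degree_def by simp
qed

lemma triangle_treeI:
  assumes "is_tree V0 E0" "r \<in> V0" "L \<subseteq> {l \<in> V0. degree E0 l = 1 \<and> l \<noteq> r}"
    "inj_on a L" "inj_on b L" "a ` L \<inter> V0 = {}" "b ` L \<inter> V0 = {}" "a ` L \<inter> b ` L = {}"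
  shows "triangle_tree (V0 \<union> a ` L \<union> b ` L) (E0 \<union> (\<Union>l\<in>L. triangle l (a l) (b l))) r"
  unfolding triangle_tree_def
  by (rule exI[of _ V0], rule exI[of _ E0], rule exI[of _ L], rule exI[of _ a], rule exI[of _ b])
    (use assms in blast)

lemma triangle_treeE:
  assumes "triangle_tree V E r"
  obtains V0 E0 L a b where "is_tree V0 E0" "r \<in> V0" "L \<subseteq> {l \<in> V0. degree E0 l = 1 \<and> l \<noteq> r}"
    "inj_on a L" "inj_on b L" "a ` L \<inter> V0 = {}" "b ` L \<inter> V0 = {}" "a ` L \<inter> b ` L = {}"
    "V = V0 \<union> a ` L \<union> b ` L" "E = E0 \<union> (\<Union>l\<in>L. triangle l (a l) (b l))"
  using assms unfolding triangle_tree_def by blast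

lemma triangle_tree_rooted: "triangle_tree V E r \<Longrightarrow> rooted (V, E, r)"
  by (elim triangle_treeE) (simp add: attach_triangles(1))

lemma tree_with_triangles_iff:
  "(\<exists>V0 E0. tree_with_triangles V E r V0 E0) \<longleftrightarrow> triangle_tree V E r \<and> degree E r = 1"
proof
  assume "\<exists>V0 E0. tree_with_triangles V E r V0 E0"
  then obtain V0 E0 L a b where t: "is_tree V0 E0" "r \<in> V0" "degree E0 r = 1"
    and L: "L \<subseteq> {l \<in> V0. degree E0 l = 1 \<and> l \<noteq> r}"
    and rest: "inj_on a L" "inj_on b L" "a ` L \<inter> V0 = {}" "b ` L \<inter> V0 = {}" "a ` L \<inter> b ` L = {}"
      "V = V0 \<union> a ` L \<union> b ` L" "E = E0 \<union> (\<Union>l\<in>L. triangle l (a l) (b l))"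
    unfolding tree_with_triangles_def root_deg1_tree_def triangle_def by blast
  then show "triangle_tree V E r \<and> degree E r = 1"
    using triangle_treeI[OF t(1,2) L rest(1-5)] attach_triangles(2)[OF t(1,2) L rest(3-5)] by simp
next
  assume "triangle_tree V E r \<and> degree E r = 1"
  then obtain V0 E0 L a b where t: "is_tree V0 E0" "r \<in> V0" "degree E r = 1"
    and L: "L \<subseteq> {l \<in> V0. degree E0 l = 1 \<and> l \<noteq> r}"
    and rest: "inj_on a L" "inj_on b L" "a ` L \<inter> V0 = {}" "b ` L \<inter> V0 = {}" "a ` L \<inter> b ` L = {}"
      "V = V0 \<union> a ` L \<union> b ` L" "E = E0 \<union> (\<Union>l\<in>L. triangle l (a l) (b l))"
    by (auto elim: triangle_treeE)
  have "degree E0 r = 1"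
    using attach_triangles(2)[OF t(1,2) L rest(3-5)] t(3) rest(7) by simp
  then have "tree_with_triangles V E r V0 E0"
    unfolding tree_with_triangles_def root_deg1_tree_def
    using t L rest unfolding triangle_def by blast
  then show "\<exists>V0 E0. tree_with_triangles V E r V0 E0"
    by blast
qed

lemma triangle_tree_pendant:
  assumes tt: "triangle_tree V E r" and y: "y \<notin> V" and z: "z = r \<or> z = y"
  shows "triangle_tree (insert y V) (insert {r, y} E) z"
proof -
  obtain V0 E0 L a b where t: "is_tree V0 E0" "r \<in> V0"
    and L: "L \<subseteq> {l \<in> V0. degree E0 l = 1 \<and> l \<noteq> r}"
    and rest: "inj_on a L" "inj_on b L" "a ` L \<inter> V0 = {}" "b ` L \<inter> V0 = {}" "a ` L \<inter> b ` L = {}"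
    and V: "V = V0 \<union> a ` L \<union> b ` L" and E: "E = E0 \<union> (\<Union>l\<in>L. triangle l (a l) (b l))"
    using tt by (rule triangle_treeE)
  have "{r, y} \<notin> E0" and fin: "finite E0"
    using t y V simple_graph_finite_edges unfolding is_tree_def simple_graph_def by auto
  moreover have "l \<noteq> r" "l \<noteq> y" if "l \<in> L" for l
    using that L y V by auto
  ultimately have "degree (insert {r, y} E0) l = degree E0 l" if "l \<in> L" for l
    using that by (simp add: degree_insert_new_edge)
  then have L': "L \<subseteq> {l \<in> insert y V0. degree (insert {r, y} E0) l = 1 \<and> l \<noteq> z}"
    using L z y V by auto
  have "triangle_tree (insert y V0 \<union> a ` L \<union> b ` L) (insert {r, y} E0 \<union> (\<Union>l\<in>L. triangle l (a l) (b l))) z"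
    using y V rest z t(2) by (intro triangle_treeI[OF is_tree_pendant[OF t] _ L' rest(1,2)]) auto
  then show ?thesis
    by (simp add: V E)
qed

lemma triangle_tree_add_triangle:
  assumes tt: "triangle_tree V E r" and new: "u \<notin> V" "p \<notin> V" "q \<notin> V" and d: "distinct [u, p, q]"
  shows "triangle_tree (V \<union> {u, p, q}) (insert {r, u} (E \<union> triangle u p q)) r"
proof -
  obtain V0 E0 L a b where t: "is_tree V0 E0" "r \<in> V0"
    and L: "L \<subseteq> {l \<in> V0. degree E0 l = 1 \<and> l \<noteq> r}"
    and inj: "inj_on a L" "inj_on b L"
    and disj: "a ` L \<inter> V0 = {}" "b ` L \<inter> V0 = {}" "a ` L \<inter> b ` L = {}"
    and V: "V = V0 \<union> a ` L \<union> b ` L" and E: "E = E0 \<union> (\<Union>l\<in>L. triangle l (a l) (b l))"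
    using tt by (rule triangle_treeE)
  have s0: "simple_graph V0 E0"
    using t unfolding is_tree_def by simp
  have uL: "u \<notin> L"
    using L new V by auto
  have "{r, u} \<notin> E0"
    using s0 new V unfolding simple_graph_def by auto
  then have deg: "degree (insert {r, u} E0) l = degree E0 l + (if l = r \<or> l = u then 1 else 0)" for l
    using simple_graph_finite_edges[OF s0] by (auto simp: degree_insert_new_edge)
  define a' where "a' = a(u := p)"
  define b' where "b' = b(u := q)"
  have img: "a' ` insert u L = insert p (a ` L)" "b' ` insert u L = insert q (b ` L)"
    using uL unfolding a'_def b'_def by (auto simp: image_iff)
  have L': "insert u L \<subseteq> {l \<in> insert u V0. degree (insert {r, u} E0) l = 1 \<and> l \<noteq> r}"
    using L deg degree_outside[OF s0, of u] new V t(2) by auto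
  have inj': "inj_on a' (insert u L)" "inj_on b' (insert u L)"
    using inj new V uL unfolding a'_def b'_def inj_on_def by auto
  have disj': "a' ` insert u L \<inter> insert u V0 = {}" "b' ` insert u L \<inter> insert u V0 = {}"
      "a' ` insert u L \<inter> b' ` insert u L = {}"
    unfolding img using disj new d V by auto
  have "(\<Union>l\<in>L. triangle l (a' l) (b' l)) = (\<Union>l\<in>L. triangle l (a l) (b l))"
    using uL unfolding a'_def b'_def by (intro SUP_cong) auto
  then have "(\<Union>l\<in>insert u L. triangle l (a' l) (b' l)) = triangle u p q \<union> (\<Union>l\<in>L. triangle l (a l) (b l))"
    by (simp add: a'_def b'_def)
  moreover have "V \<union> {u, p, q} = insert u V0 \<union> a' ` insert u L \<union> b' ` insert u L"
    unfolding img V by auto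
  ultimately show ?thesis
    using triangle_treeI[OF is_tree_pendant[OF t(1,2), of u] _ L' inj' disj'] new V t(2) unfolding E
    by (simp add: Un_ac)
qed

section \<open>Two-spin linear algebra\<close>

definition mat2_app :: "(bool \<Rightarrow> bool \<Rightarrow> real) \<Rightarrow> (bool \<Rightarrow> real) \<Rightarrow> bool \<Rightarrow> real" where
  "mat2_app A v s = A s True * v True + A s False * v False"

definition det2 :: "(bool \<Rightarrow> bool \<Rightarrow> real) \<Rightarrow> real" where
  "det2 A = A True True * A False False - A True False * A False True"

definition spin_ratio :: "(bool \<Rightarrow> real) \<Rightarrow> real" where
  "spin_ratio Z = Z True / Z False"

definition spin_gap :: "(bool \<Rightarrow> real) \<Rightarrow> (bool \<Rightarrow> real) \<Rightarrow> real" where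
  "spin_gap Z N = N True / Z True - N False / Z False"

lemma spin_gap_transfer:
  fixes Z Y N M :: "bool \<Rightarrow> real" and A B :: "bool \<Rightarrow> bool \<Rightarrow> real"
  assumes Z: "\<And>s. 0 < Z s" and Y: "\<And>s. 0 < Y s" and AZ: "\<And>s. 0 < mat2_app A Z s"
    and ratio: "spin_ratio Z = spin_ratio Y" and det: "det2 A \<noteq> 0"
    and gap: "spin_gap Z N \<noteq> spin_gap Y M"
  shows "spin_ratio (mat2_app A Z) = spin_ratio (mat2_app A Y)"
    and "spin_gap (mat2_app A Z) (\<lambda>s. mat2_app A N s + mat2_app B Z s)
      \<noteq> spin_gap (mat2_app A Y) (\<lambda>s. mat2_app A M s + mat2_app B Y s)"
proof -
  define k where "k = Y True / Z True"
  have k: "0 < k"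
    using Y Z by (simp add: k_def)
  have Y_eq: "Y s = k * Z s" for s
    using ratio Z[of True] Z[of False] Y[of False]
    by (cases s) (auto simp: k_def spin_ratio_def field_simps)
  have AY_eq: "mat2_app A Y s = k * mat2_app A Z s" for s
    by (simp add: mat2_app_def Y_eq algebra_simps)
  show "spin_ratio (mat2_app A Z) = spin_ratio (mat2_app A Y)"
    using k by (simp add: spin_ratio_def AY_eq)
  define \<delta> where "\<delta> s = N s / Z s - M s / Y s" for s
  define D where "D = mat2_app A (\<lambda>s. Z s * \<delta> s)"
  have N_eq: "N s = M s / k + Z s * \<delta> s" for s
    using Z[of s] k by (simp add: \<delta>_def Y_eq field_simps)
  have pointwise: "(mat2_app A N s + mat2_app B Z s) / mat2_app A Z s
      - (mat2_app A M s + mat2_app B Y s) / mat2_app A Y s = D s / mat2_app A Z s" for s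
  proof -
    have AN: "mat2_app A N s = mat2_app A M s / k + D s"
      by (simp add: D_def mat2_app_def N_eq algebra_simps add_divide_distrib)
    have BY: "mat2_app B Y s = k * mat2_app B Z s"
      by (simp add: mat2_app_def Y_eq algebra_simps)
    show ?thesis
      using k AZ[of s] unfolding AN BY AY_eq by (simp add: field_simps)
  qed
  have "D True * mat2_app A Z False - D False * mat2_app A Z True
      = det2 A * Z True * Z False * (\<delta> True - \<delta> False)"
    by (simp add: D_def mat2_app_def det2_def algebra_simps)
  then have "spin_gap (mat2_app A Z) (\<lambda>s. mat2_app A N s + mat2_app B Z s)
      - spin_gap (mat2_app A Y) (\<lambda>s. mat2_app A M s + mat2_app B Y s)
      = det2 A * Z True * Z False * (\<delta> True - \<delta> False) / (mat2_app A Z True * mat2_app A Z False)"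
    using pointwise[of True] pointwise[of False] AZ[of True] AZ[of False]
    by (simp add: spin_gap_def field_simps)
  moreover have "\<delta> True - \<delta> False = spin_gap Z N - spin_gap Y M"
    by (simp add: \<delta>_def spin_gap_def)
  ultimately show "spin_gap (mat2_app A Z) (\<lambda>s. mat2_app A N s + mat2_app B Z s)
      \<noteq> spin_gap (mat2_app A Y) (\<lambda>s. mat2_app A M s + mat2_app B Y s)"
    using det gap Z[of True] Z[of False] AZ[of True] AZ[of False] by auto
qed

section \<open>Partition sums of rooted graphs\<close>

locale spin_system =
  fixes \<beta> \<gamma> lam :: real
begin

definition edge_factor :: "nat set \<Rightarrow> nat set \<Rightarrow> real" where
  "edge_factor S e = (if e \<inter> S = {} then \<beta> else if e \<subseteq> S then \<gamma> else 1)"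

lemma power_m0_m1_eq_prod:
  assumes "finite E" "{} \<notin> E"
  shows "\<beta> ^ m0 E S * \<gamma> ^ m1 E S = (\<Prod>e\<in>E. edge_factor S e)"
  using assms
proof (induction E rule: finite_induct)
  case empty
  then show ?case
    by (simp add: m0_def m1_def)
next
  case (insert e E)
  have "m0 (insert e E) S = m0 E S + (if e \<inter> S = {} then 1 else 0)"
    unfolding m0_def using card_filter_insert[OF insert(1,2), of "\<lambda>x. x \<inter> S = {}"] by simp
  moreover have "m1 (insert e E) S = m1 E S + (if e \<subseteq> S then 1 else 0)"
    unfolding m1_def using card_filter_insert[OF insert(1,2), of "\<lambda>x. x \<subseteq> S"] by simp
  moreover have "e \<noteq> {}"
    using insert.prems by auto
  ultimately show ?case
    using insert by (auto simp: edge_factor_def power_add mult_ac)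
qed

lemma weight_eq_prod:
  assumes "simple_graph V E"
  shows "weight \<beta> \<gamma> lam E S = lam ^ card S * (\<Prod>e\<in>E. edge_factor S e)"
  using power_m0_m1_eq_prod[OF simple_graph_finite_edges[OF assms] simple_graph_empty_notin[OF assms]]
  by (simp add: weight_def mult.assoc)

lemma edge_factor_Un_disjoint: "e \<inter> B = {} \<Longrightarrow> edge_factor (A \<union> B) e = edge_factor A e"
proof -
  assume "e \<inter> B = {}"
  then have "e \<inter> (A \<union> B) = e \<inter> A" "e \<subseteq> A \<union> B \<longleftrightarrow> e \<subseteq> A"
    by blast+
  then show ?thesis
    unfolding edge_factor_def by simp
qed

definition spin_factor :: "bool \<Rightarrow> bool \<Rightarrow> real" where
  "spin_factor s t = (if s \<and> t then \<gamma> else if \<not> s \<and> \<not> t then \<beta> else 1)"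

lemma weight_join:
  assumes V: "simple_graph V E" and W: "simple_graph W F" and disj: "V \<inter> W = {}"
    and x: "x \<in> V" and y: "y \<in> W" and A: "A \<subseteq> V" and B: "B \<subseteq> W"
  shows "weight \<beta> \<gamma> lam (insert {x, y} (E \<union> F)) (A \<union> B)
    = spin_factor (x \<in> A) (y \<in> B) * weight \<beta> \<gamma> lam E A * weight \<beta> \<gamma> lam F B"
proof -
  have C: "simple_graph (V \<union> W) (insert {x, y} (E \<union> F))"
    using rooted_join[of V E x W F y] assms by simp
  have EV: "\<forall>e\<in>E. e \<subseteq> V" and FW: "\<forall>e\<in>F. e \<subseteq> W"
    using V W unfolding simple_graph_def by auto
  have fin: "finite E" "finite F" "finite A" "finite B"
    using simple_graph_finite_edges[OF V] simple_graph_finite_edges[OF W] V W A B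
    by (auto simp: simple_graph_def intro: finite_subset)
  have new: "{x, y} \<notin> E \<union> F"
    using EV FW x y disj by blast
  have card: "card (A \<union> B) = card A + card B"
    using fin A B disj by (intro card_Un_disjoint) auto
  have "(\<Prod>e\<in>E. edge_factor (A \<union> B) e) = (\<Prod>e\<in>E. edge_factor A e)"
    using EV B disj by (intro prod.cong refl edge_factor_Un_disjoint) blast
  moreover have "(\<Prod>e\<in>F. edge_factor (A \<union> B) e) = (\<Prod>e\<in>F. edge_factor B e)"
    unfolding Un_commute[of A B] using FW A disj by (intro prod.cong refl edge_factor_Un_disjoint) blast
  moreover have "edge_factor (A \<union> B) {x, y} = spin_factor (x \<in> A) (y \<in> B)"
    using x y A B disj unfolding edge_factor_def spin_factor_def by auto
  ultimately show ?thesis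
    using fin new simple_graphs_disjoint_edges[OF V W disj]
    unfolding weight_eq_prod[OF C] weight_eq_prod[OF V] weight_eq_prod[OF W] card
    by (simp add: prod.union_disjoint power_add mult_ac)
qed

definition Z_on :: "nat set \<Rightarrow> nat set set \<Rightarrow> (nat set \<Rightarrow> bool) \<Rightarrow> real" where
  "Z_on V E P = (\<Sum>S\<in>Pow V. if P S then weight \<beta> \<gamma> lam E S else 0)"

definition N_on :: "nat set \<Rightarrow> nat set set \<Rightarrow> (nat set \<Rightarrow> bool) \<Rightarrow> real" where
  "N_on V E P = (\<Sum>S\<in>Pow V. if P S then real (card S) * weight \<beta> \<gamma> lam E S else 0)"

lemma Z_on_split: "Z_on V E P = Z_on V E (\<lambda>S. P S \<and> Q S) + Z_on V E (\<lambda>S. P S \<and> \<not> Q S)"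
  unfolding Z_on_def sum.distrib[symmetric] by (intro sum.cong refl) simp

lemma N_on_split: "N_on V E P = N_on V E (\<lambda>S. P S \<and> Q S) + N_on V E (\<lambda>S. P S \<and> \<not> Q S)"
  unfolding N_on_def sum.distrib[symmetric] by (intro sum.cong refl) simp

lemma sum_Pow_join:
  assumes V: "simple_graph V E" and W: "simple_graph W F" and disj: "V \<inter> W = {}"
    and x: "x \<in> V" and y: "y \<in> W"
  shows "(\<Sum>S\<in>Pow (V \<union> W). if (x \<in> S) = s \<and> (y \<in> S) = t
        then h S * weight \<beta> \<gamma> lam (insert {x, y} (E \<union> F)) S else 0)
    = spin_factor s t * (\<Sum>A\<in>Pow V. \<Sum>B\<in>Pow W.
        h (A \<union> B) * (if (x \<in> A) = s then weight \<beta> \<gamma> lam E A else 0)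
          * (if (y \<in> B) = t then weight \<beta> \<gamma> lam F B else 0))"
proof -
  let ?C = "insert {x, y} (E \<union> F)"
  have "(\<Sum>S\<in>Pow (V \<union> W). if (x \<in> S) = s \<and> (y \<in> S) = t then h S * weight \<beta> \<gamma> lam ?C S else 0)
      = (\<Sum>S\<in>Pow (V \<union> W). (\<lambda>A B. if (x \<in> A) = s \<and> (y \<in> B) = t
          then h (A \<union> B) * weight \<beta> \<gamma> lam ?C (A \<union> B) else 0) (S \<inter> V) (S \<inter> W))"
  proof (rule sum.cong)
    fix S
    assume "S \<in> Pow (V \<union> W)"
    then have "S \<inter> V \<union> S \<inter> W = S"
      by auto
    then show "(if (x \<in> S) = s \<and> (y \<in> S) = t then h S * weight \<beta> \<gamma> lam ?C S else 0)
      = (\<lambda>A B. if (x \<in> A) = s \<and> (y \<in> B) = t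
          then h (A \<union> B) * weight \<beta> \<gamma> lam ?C (A \<union> B) else 0) (S \<inter> V) (S \<inter> W)"
      using x y by simp
  qed simp
  also have "\<dots> = (\<Sum>A\<in>Pow V. \<Sum>B\<in>Pow W. if (x \<in> A) = s \<and> (y \<in> B) = t
      then h (A \<union> B) * weight \<beta> \<gamma> lam ?C (A \<union> B) else 0)"
    by (rule sum_Pow_Un_disjoint[OF disj])
  also have "\<dots> = spin_factor s t * (\<Sum>A\<in>Pow V. \<Sum>B\<in>Pow W.
        h (A \<union> B) * (if (x \<in> A) = s then weight \<beta> \<gamma> lam E A else 0)
          * (if (y \<in> B) = t then weight \<beta> \<gamma> lam F B else 0))"
    unfolding sum_distrib_left
    by (intro sum.cong refl) (auto simp: weight_join[OF V W disj x y])
  finally show ?thesis .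
qed

lemma Z_on_join:
  assumes "simple_graph V E" "simple_graph W F" "V \<inter> W = {}" "x \<in> V" "y \<in> W"
  shows "Z_on (V \<union> W) (insert {x, y} (E \<union> F)) (\<lambda>S. (x \<in> S) = s \<and> (y \<in> S) = t)
    = spin_factor s t * Z_on V E (\<lambda>A. (x \<in> A) = s) * Z_on W F (\<lambda>B. (y \<in> B) = t)"
  using sum_Pow_join[OF assms, of s t "\<lambda>_. 1", unfolded mult_1_left]
  by (simp add: Z_on_def sum_product mult.assoc)

lemma N_on_join:
  assumes V: "simple_graph V E" and W: "simple_graph W F" and disj: "V \<inter> W = {}"
    and "x \<in> V" "y \<in> W"
  shows "N_on (V \<union> W) (insert {x, y} (E \<union> F)) (\<lambda>S. (x \<in> S) = s \<and> (y \<in> S) = t)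
    = spin_factor s t * (N_on V E (\<lambda>A. (x \<in> A) = s) * Z_on W F (\<lambda>B. (y \<in> B) = t)
        + Z_on V E (\<lambda>A. (x \<in> A) = s) * N_on W F (\<lambda>B. (y \<in> B) = t))"
proof -
  let ?wE = "\<lambda>A. if (x \<in> A) = s then weight \<beta> \<gamma> lam E A else 0"
  let ?wF = "\<lambda>B. if (y \<in> B) = t then weight \<beta> \<gamma> lam F B else 0"
  let ?nE = "\<lambda>A. if (x \<in> A) = s then real (card A) * weight \<beta> \<gamma> lam E A else 0"
  let ?nF = "\<lambda>B. if (y \<in> B) = t then real (card B) * weight \<beta> \<gamma> lam F B else 0"
  have "(\<Sum>A\<in>Pow V. \<Sum>B\<in>Pow W. real (card (A \<union> B)) * ?wE A * ?wF B)
      = (\<Sum>A\<in>Pow V. \<Sum>B\<in>Pow W. ?nE A * ?wF B + ?wE A * ?nF B)"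
  proof (intro sum.cong refl)
    fix A B
    assume "A \<in> Pow V" "B \<in> Pow W"
    then have "card (A \<union> B) = card A + card B"
      using V W disj finite_subset unfolding simple_graph_def by (intro card_Un_disjoint) auto
    then show "real (card (A \<union> B)) * ?wE A * ?wF B = ?nE A * ?wF B + ?wE A * ?nF B"
      by (simp add: algebra_simps)
  qed
  also have "\<dots> = N_on V E (\<lambda>A. (x \<in> A) = s) * Z_on W F (\<lambda>B. (y \<in> B) = t)
      + Z_on V E (\<lambda>A. (x \<in> A) = s) * N_on W F (\<lambda>B. (y \<in> B) = t)"
    by (simp add: N_on_def Z_on_def sum_product sum.distrib)
  finally show ?thesis
    using sum_Pow_join[OF assms, of s t "\<lambda>S. real (card S)"] by (simp add: N_on_def mult.assoc)
qed

fun Z_root :: "rgraph \<Rightarrow> bool \<Rightarrow> real" where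
  "Z_root (V, E, r) s = Z_on V E (\<lambda>S. (r \<in> S) = s)"

fun N_root :: "rgraph \<Rightarrow> bool \<Rightarrow> real" where
  "N_root (V, E, r) s = N_on V E (\<lambda>S. (r \<in> S) = s)"

lemma Z_root_join:
  assumes "rooted (V, E, x)" "rooted (W, F, y)" "V \<inter> W = {}"
  shows "Z_root (join (V, E, x) (W, F, y)) s = mat2_app spin_factor (Z_root (W, F, y)) s * Z_root (V, E, x) s"
    and "N_root (join (V, E, x) (W, F, y)) s = mat2_app spin_factor (Z_root (W, F, y)) s * N_root (V, E, x) s
      + mat2_app spin_factor (N_root (W, F, y)) s * Z_root (V, E, x) s"
proof -
  have prems: "simple_graph V E" "simple_graph W F" "V \<inter> W = {}" "x \<in> V" "y \<in> W"
    using assms by auto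
  show "Z_root (join (V, E, x) (W, F, y)) s = mat2_app spin_factor (Z_root (W, F, y)) s * Z_root (V, E, x) s"
    using Z_on_split[of "V \<union> W" _ "\<lambda>S. (x \<in> S) = s" "\<lambda>S. y \<in> S"]
      Z_on_join[OF prems, of s True] Z_on_join[OF prems, of s False]
    by (simp add: mat2_app_def algebra_simps)
  show "N_root (join (V, E, x) (W, F, y)) s = mat2_app spin_factor (Z_root (W, F, y)) s * N_root (V, E, x) s
      + mat2_app spin_factor (N_root (W, F, y)) s * Z_root (V, E, x) s"
    using N_on_split[of "V \<union> W" _ "\<lambda>S. (x \<in> S) = s" "\<lambda>S. y \<in> S"]
      N_on_join[OF prems, of s True] N_on_join[OF prems, of s False]
    by (simp add: mat2_app_def algebra_simps)
qed

lemma Z_root_leaf: "Z_root ({n}, {}, n) s = (if s then lam else 1)"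
  and N_root_leaf: "N_root ({n}, {}, n) s = (if s then lam else 0)"
proof -
  have "Pow {n} = {{}, {n}}"
    by auto
  then show "Z_root ({n}, {}, n) s = (if s then lam else 1)" "N_root ({n}, {}, n) s = (if s then lam else 0)"
    by (simp_all add: Z_on_def N_on_def weight_def m0_def m1_def)
qed

definition triangle_Z :: "bool \<Rightarrow> real" where
  "triangle_Z s = (if s then lam * (lam\<^sup>2 * \<gamma>^3 + 2 * lam * \<gamma> + \<beta>) else lam\<^sup>2 * \<gamma> + 2 * lam * \<beta> + \<beta>^3)"

definition triangle_N :: "bool \<Rightarrow> real" where
  "triangle_N s = (if s then lam * \<beta> + 4 * lam\<^sup>2 * \<gamma> + 3 * lam^3 * \<gamma>^3 else 2 * lam * \<beta> + 2 * lam\<^sup>2 * \<gamma>)"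

lemma Z_root_triangle:
  assumes "distinct [u, p, q]"
  shows "Z_root ({u, p, q}, triangle u p q, u) = triangle_Z" and "N_root ({u, p, q}, triangle u p q, u) = triangle_N"
proof -
  have sum_Pow3: "(\<Sum>S\<in>Pow {u, p, q}. f S)
      = f {} + f {q} + f {p} + f {p, q} + f {u} + f {u, q} + f {u, p} + f {u, p, q}" for f :: "nat set \<Rightarrow> real"
    using assms by (simp add: sum_Pow_insert add.assoc)
  have "triangle u p q = {{u, p}, {u, q}, {p, q}}" "{u, p} \<notin> {{u, q}, {p, q}}" "{u, q} \<noteq> {p, q}"
    using assms by (auto simp: triangle_def doubleton_eq_iff)
  then have w: "weight \<beta> \<gamma> lam (triangle u p q) S
      = lam ^ card S * (edge_factor S {u, p} * edge_factor S {u, q} * edge_factor S {p, q})" for S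
    using weight_eq_prod[of "{u, p, q}"] rooted_triangle[OF assms] by (simp add: mult.assoc)
  show "Z_root ({u, p, q}, triangle u p q, u) = triangle_Z" "N_root ({u, p, q}, triangle u p q, u) = triangle_N"
    using assms
    by (auto simp: fun_eq_iff Z_on_def N_on_def triangle_Z_def triangle_N_def
        sum_Pow3 w edge_factor_def card_insert_if power2_eq_square power3_eq_cube algebra_simps)
qed

definition special :: bool where
  "special \<longleftrightarrow> lam = (1 - \<beta>) / (1 - \<gamma>) \<and> \<beta> \<noteq> \<gamma>"

text \<open>In the special case a pendant leaf multiplies the effective field by exactly 1, so a
  pendant triangle is used instead (this is why the paper allows triangles there).\<close>

definition add_branch :: "rgraph \<Rightarrow> rgraph" where
  "add_branch T = (if special then add_triangle T else add_leaf T)"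

definition branch_Z :: "bool \<Rightarrow> real" where
  "branch_Z = (if special then triangle_Z else (\<lambda>s. if s then lam else 1))"

definition branch_N :: "bool \<Rightarrow> real" where
  "branch_N = (if special then triangle_N else (\<lambda>s. if s then lam else 0))"

lemma Z_root_new_root:
  assumes "rooted T"
  shows "Z_root (new_root T) s = (if s then lam else 1) * mat2_app spin_factor (Z_root T) s"
    and "N_root (new_root T) s = (if s then lam else 0) * mat2_app spin_factor (Z_root T) s
      + (if s then lam else 1) * mat2_app spin_factor (N_root T) s"
proof -
  obtain V E r where T: "T = (V, E, r)"
    by (cases T)
  define n where "n = fresh V 0"
  have "n \<notin> V"
    using assms T by (simp add: n_def simple_graph_def fresh_notin)
  then have "rooted ({n}, {}, n)" "rooted (V, E, r)" "{n} \<inter> V = {}"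
    using assms T rooted_leaf by auto
  from Z_root_join[OF this, of s]
  show "Z_root (new_root T) s = (if s then lam else 1) * mat2_app spin_factor (Z_root T) s"
    and "N_root (new_root T) s = (if s then lam else 0) * mat2_app spin_factor (Z_root T) s
      + (if s then lam else 1) * mat2_app spin_factor (N_root T) s"
    by (simp_all only: T new_root.simps n_def[symmetric] Z_root_leaf N_root_leaf) (simp_all add: algebra_simps)
qed

lemma add_branch_join:
  assumes "finite V"
  obtains W F y where "add_branch (V, E, r) = join (V, E, r) (W, F, y)" "rooted (W, F, y)" "V \<inter> W = {}"
    "Z_root (W, F, y) = branch_Z" "N_root (W, F, y) = branch_N"
    "gadget_max_degree_le (W, F, y) 2" "root_degree (W, F, y) \<le> 2"
proof (cases special)
  case True
  define u p q where "u = fresh V 0" and "p = fresh V 1" and "q = fresh V 2"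
  have d: "distinct [u, p, q]"
    by (simp add: u_def p_def q_def)
  show ?thesis
  proof (rule that)
    show "add_branch (V, E, r) = join (V, E, r) ({u, p, q}, triangle u p q, u)"
      using True by (simp add: add_branch_def u_def p_def q_def)
    show "V \<inter> {u, p, q} = {}"
      using fresh_notin[OF assms] by (auto simp: u_def p_def q_def)
  qed (use True Z_root_triangle[OF d] rooted_triangle[OF d] triangle_degrees[OF d] degree_triangle[OF d] in
      \<open>simp_all add: branch_Z_def branch_N_def\<close>)
next
  case False
  show ?thesis
  proof (rule that)
    show "add_branch (V, E, r) = join (V, E, r) ({fresh V 0}, {}, fresh V 0)"
      using False by (simp add: add_branch_def)
    show "V \<inter> {fresh V 0} = {}"
      using fresh_notin[OF assms] by auto
  qed (use False Z_root_leaf N_root_leaf rooted_leaf in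
      \<open>simp_all add: branch_Z_def branch_N_def fun_eq_iff gadget_max_degree_le_def max_degree_le_def degree_def\<close>)
qed

lemma Z_root_add_branch:
  assumes "rooted T"
  shows "rooted (add_branch T)"
    and "Z_root (add_branch T) s = mat2_app spin_factor branch_Z s * Z_root T s"
    and "N_root (add_branch T) s = mat2_app spin_factor branch_Z s * N_root T s + mat2_app spin_factor branch_N s * Z_root T s"
proof -
  obtain V E r where T: "T = (V, E, r)"
    by (cases T)
  then have rT: "rooted (V, E, r)" and fin: "finite V"
    using assms by (auto simp: simple_graph_def)
  obtain W F y where B: "add_branch T = join (V, E, r) (W, F, y)" "rooted (W, F, y)" "V \<inter> W = {}"
    "Z_root (W, F, y) = branch_Z" "N_root (W, F, y) = branch_N"
    "gadget_max_degree_le (W, F, y) 2" "root_degree (W, F, y) \<le> 2"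
    using fin unfolding T by (rule add_branch_join)
  show "rooted (add_branch T)"
    unfolding B(1) by (rule rooted_join[OF rT B(2,3)])
  show "Z_root (add_branch T) s = mat2_app spin_factor branch_Z s * Z_root T s"
    "N_root (add_branch T) s = mat2_app spin_factor branch_Z s * N_root T s + mat2_app spin_factor branch_N s * Z_root T s"
    unfolding B(1) Z_root_join[OF rT B(2,3)] B(4,5) by (simp_all add: T)
qed

end

lemma gadget_max_degree_le_mono:
  "gadget_max_degree_le T D \<Longrightarrow> D \<le> D' \<Longrightarrow> gadget_max_degree_le T D'"
  by (cases T) (force simp: gadget_max_degree_le_def max_degree_le_def)

context spin_system
begin

fun gadget_graph :: "rgraph \<Rightarrow> bool" where
  "gadget_graph (V, E, r) \<longleftrightarrow> (if special then triangle_tree V E r else is_tree V E \<and> r \<in> V)"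

definition bounded_gadget :: "nat \<Rightarrow> rgraph \<Rightarrow> bool" where
  "bounded_gadget D T \<longleftrightarrow> field_gadget \<beta> \<gamma> lam T \<and> gadget_max_degree_le T D"

lemma field_gadget_iff: "field_gadget \<beta> \<gamma> lam T \<longleftrightarrow> gadget_graph T \<and> root_degree T = 1"
  by (cases T) (auto simp: field_gadget_def special_def tree_with_triangles_iff root_deg1_tree_def)

lemma gadget_graph_rooted: "gadget_graph T \<Longrightarrow> rooted T"
  by (cases T) (auto simp: is_tree_def dest: triangle_tree_rooted split: if_splits)

lemma gadget_graph_new_root:
  assumes "gadget_graph T"
  shows "gadget_graph (new_root T)"
proof -
  obtain V E r where T: "T = (V, E, r)"
    by (cases T)
  have "rooted T"
    using assms by (rule gadget_graph_rooted)
  then have n: "fresh V 0 \<notin> V"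
    using T by (simp add: simple_graph_def fresh_notin)
  have eq: "new_root T = (insert (fresh V 0) V, insert {r, fresh V 0} E, fresh V 0)"
    by (simp add: T insert_commute)
  show ?thesis
    using assms n triangle_tree_pendant[of V E r "fresh V 0" "fresh V 0"] is_tree_pendant[of V E r "fresh V 0"]
    by (simp add: eq T insert_commute)
qed

lemma gadget_graph_add_branch:
  assumes "gadget_graph T"
  shows "gadget_graph (add_branch T)"
proof -
  obtain V E r where T: "T = (V, E, r)"
    by (cases T)
  have "rooted T"
    using assms by (rule gadget_graph_rooted)
  then have n: "fresh V k \<notin> V" for k
    using T by (simp add: simple_graph_def fresh_notin)
  show ?thesis
  proof (cases special)
    case True
    then show ?thesis
      using assms n triangle_tree_add_triangle[of V E r "fresh V 0" "fresh V 1" "fresh V 2"]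
      by (simp add: T add_branch_def)
  next
    case False
    then show ?thesis
      using assms n is_tree_pendant[of V E r "fresh V 0"] by (simp add: T add_branch_def)
  qed
qed

lemma new_root_degrees:
  assumes "rooted T" "gadget_max_degree_le T D" "root_degree T < D"
  shows "gadget_max_degree_le (new_root T) D" and "root_degree (new_root T) = 1"
proof -
  obtain V E r where T: "T = (V, E, r)"
    by (cases T)
  define n where "n = fresh V 0"
  have "n \<notin> V"
    using assms T by (simp add: n_def simple_graph_def fresh_notin)
  then have join: "rooted ({n}, {}, n)" "rooted (V, E, r)" "{n} \<inter> V = {}"
    using assms T rooted_leaf by auto
  have leaf: "gadget_max_degree_le ({n}, {}, n) D" "root_degree ({n}, {}, n) = 0"
    by (simp_all add: gadget_max_degree_le_def max_degree_le_def degree_def)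
  show "gadget_max_degree_le (new_root T) D" "root_degree (new_root T) = 1"
    using max_degree_join[OF join leaf(1)] root_degree_join[OF join] assms leaf
    by (simp_all add: T n_def)
qed

lemma add_branch_degrees:
  assumes "rooted T" "gadget_max_degree_le T D" "root_degree T < D" "3 \<le> D"
  shows "gadget_max_degree_le (add_branch T) D" and "root_degree (add_branch T) = root_degree T + 1"
proof -
  obtain V E r where T: "T = (V, E, r)"
    by (cases T)
  then have rT: "rooted (V, E, r)" and fin: "finite V"
    using assms by (auto simp: simple_graph_def)
  obtain W F y where B: "add_branch T = join (V, E, r) (W, F, y)" "rooted (W, F, y)" "V \<inter> W = {}"
    "Z_root (W, F, y) = branch_Z" "N_root (W, F, y) = branch_N"
    "gadget_max_degree_le (W, F, y) 2" "root_degree (W, F, y) \<le> 2"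
    using fin unfolding T by (rule add_branch_join)
  have "gadget_max_degree_le (W, F, y) D"
    using assms(4) by (intro gadget_max_degree_le_mono[OF B(6)]) simp
  then show "gadget_max_degree_le (add_branch T) D" "root_degree (add_branch T) = root_degree T + 1"
    using max_degree_join[OF rT B(2,3)] root_degree_join[OF rT B(2,3)] assms B(7)
    unfolding B(1) by (simp_all add: T)
qed

lemma bounded_gadget_new_root:
  assumes "gadget_graph T" "gadget_max_degree_le T D" "root_degree T < D"
  shows "bounded_gadget D (new_root T)"
  using assms gadget_graph_new_root new_root_degrees gadget_graph_rooted
  unfolding bounded_gadget_def field_gadget_iff by blast

lemma bounded_gadget_rooted: "bounded_gadget D T \<Longrightarrow> rooted T"
  by (simp add: bounded_gadget_def field_gadget_iff gadget_graph_rooted)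

lemma bounded_gadget_new_root':
  assumes "bounded_gadget D T" "2 \<le> D"
  shows "bounded_gadget D (new_root T)"
  using assms by (intro bounded_gadget_new_root) (auto simp: bounded_gadget_def field_gadget_iff)

lemma bounded_gadget_shift:
  assumes "bounded_gadget D T" "3 \<le> D"
  shows "bounded_gadget D (new_root (add_branch (new_root T)))"
proof -
  have T: "gadget_graph T" "gadget_max_degree_le T D" "root_degree T = 1"
    using assms unfolding bounded_gadget_def field_gadget_iff by auto
  have T1: "gadget_graph (new_root T)" "bounded_gadget D (new_root T)" "root_degree (new_root T) = 1"
    using T assms(2) gadget_graph_new_root bounded_gadget_new_root new_root_degrees(2) gadget_graph_rooted
    by auto
  have "rooted (new_root T)"
    using T1(1) by (rule gadget_graph_rooted)
  then have "gadget_max_degree_le (add_branch (new_root T)) D" "root_degree (add_branch (new_root T)) = 2"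
    using add_branch_degrees[of "new_root T" D] T1 assms(2) unfolding bounded_gadget_def by auto
  then show ?thesis
    using gadget_graph_add_branch[OF T1(1)] assms(2) by (intro bounded_gadget_new_root) auto
qed

end

section \<open>Antiferromagnetic systems\<close>

locale antiferro_system = spin_system +
  assumes antiferro: "antiferromagnetic \<beta> \<gamma>" and lam_pos: "0 < lam"
begin

lemma beta_nonneg: "0 \<le> \<beta>" and gamma_nonneg: "0 \<le> \<gamma>" and beta_gamma_less_1: "\<beta> * \<gamma> < 1"
  and beta_or_gamma_pos: "0 < \<beta> \<or> 0 < \<gamma>"
  using antiferro unfolding antiferromagnetic_def by auto

lemma weight_nonneg: "0 \<le> weight \<beta> \<gamma> lam E S"
  using beta_nonneg gamma_nonneg lam_pos by (simp add: weight_def)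

text \<open>If \<open>\<gamma> > 0\<close>, give every vertex except possibly the root spin 1, so that no edge is
  monochromatic 0; if \<open>\<gamma> = 0\<close>, then \<open>\<beta> > 0\<close> and at most the root gets spin 1.\<close>

lemma positive_weight_configuration:
  assumes V: "simple_graph V E" and r: "r \<in> V"
  obtains S where "S \<subseteq> V" "(r \<in> S) = s" "0 < weight \<beta> \<gamma> lam E S"
proof -
  have edges: "e \<subseteq> V" "card e = 2" if "e \<in> E" for e
    using that V by (auto simp: simple_graph_def)
  show ?thesis
  proof (cases "0 < \<gamma>")
    case True
    let ?S = "if s then V else V - {r}"
    have "e \<inter> ?S \<noteq> {}" if e: "e \<in> E" for e
    proof -
      obtain a b where "e = {a, b}" "a \<noteq> b"
        using edges(2)[OF e] by (auto simp: card_2_iff)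
      then show ?thesis
        using edges(1)[OF e] by auto
    qed
    then have "{e \<in> E. e \<inter> ?S = {}} = {}"
      by blast
    then have "m0 E ?S = 0"
      unfolding m0_def by (metis card.empty)
    then show ?thesis
      using that[of ?S] True r lam_pos by (auto simp: weight_def)
  next
    case False
    then have "0 < \<beta>"
      using beta_or_gamma_pos by simp
    let ?S = "if s then {r} else {}"
    have "\<not> e \<subseteq> ?S" if "e \<in> E" for e
      using edges(2)[OF that] by (auto dest: card_mono[rotated] split: if_splits)
    then have "{e \<in> E. e \<subseteq> ?S} = {}"
      by blast
    then have "m1 E ?S = 0"
      unfolding m1_def by (metis card.empty)
    then show ?thesis
      using that[of ?S] \<open>0 < \<beta>\<close> r lam_pos by (auto simp: weight_def)
  qed
qed

lemma Z_root_pos: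
  assumes "rooted T"
  shows "0 < Z_root T s"
proof -
  obtain V E r where T: "T = (V, E, r)"
    by (cases T)
  then have V: "simple_graph V E" and "finite V" "r \<in> V"
    using assms by (auto simp: simple_graph_def)
  obtain S where S: "S \<subseteq> V" "(r \<in> S) = s" "0 < weight \<beta> \<gamma> lam E S"
    using V \<open>r \<in> V\<close> by (rule positive_weight_configuration)
  have "0 < (\<Sum>S\<in>Pow V. if (r \<in> S) = s then weight \<beta> \<gamma> lam E S else 0)"
    by (rule sum_pos2[of _ S]) (use \<open>finite V\<close> S weight_nonneg in auto)
  then show ?thesis
    by (simp add: T Z_on_def)
qed

lemma mat2_app_spin_factor_pos:
  assumes "\<And>t. 0 < v t"
  shows "0 < mat2_app spin_factor v s"
proof -
  have "0 \<le> \<gamma> * v True" "0 \<le> \<beta> * v False"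
    using assms beta_nonneg gamma_nonneg by (simp_all add: less_imp_le)
  then show ?thesis
    using assms[of True] assms[of False] by (cases s) (simp_all add: mat2_app_def spin_factor_def)
qed

lemma gibbs_sums:
  assumes "rooted (V, E, r)"
  shows "Zpart \<beta> \<gamma> lam V E = Z_root (V, E, r) True + Z_root (V, E, r) False"
    and "gibbs_prob \<beta> \<gamma> lam V E (\<lambda>S. r \<in> S) = Z_root (V, E, r) True / Zpart \<beta> \<gamma> lam V E"
    and "gibbs_prob \<beta> \<gamma> lam V E (\<lambda>S. r \<notin> S) = Z_root (V, E, r) False / Zpart \<beta> \<gamma> lam V E"
    and "gibbs_cond_exp \<beta> \<gamma> lam V E (\<lambda>S. real (card S)) (\<lambda>S. r \<in> S) = N_root (V, E, r) True / Z_root (V, E, r) True"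
    and "gibbs_cond_exp \<beta> \<gamma> lam V E (\<lambda>S. real (card S)) (\<lambda>S. r \<notin> S) = N_root (V, E, r) False / Z_root (V, E, r) False"
proof -
  have fin: "finite V"
    using assms by (simp add: simple_graph_def)
  have filter: "(\<Sum>S\<in>{S \<in> Pow V. P S}. h S) = (\<Sum>S\<in>Pow V. if P S then h S else 0)"
    for P and h :: "nat set \<Rightarrow> real"
    using fin by (intro sum.inter_filter) simp
  show Zp: "Zpart \<beta> \<gamma> lam V E = Z_root (V, E, r) True + Z_root (V, E, r) False"
    unfolding Zpart_def Z_root.simps Z_on_def sum.distrib[symmetric] by (intro sum.cong refl) simp
  have pos: "0 < Z_root (V, E, r) True" "0 < Z_root (V, E, r) False"
    by (rule Z_root_pos[OF assms])+
  show p1: "gibbs_prob \<beta> \<gamma> lam V E (\<lambda>S. r \<in> S) = Z_root (V, E, r) True / Zpart \<beta> \<gamma> lam V E"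
    and p0: "gibbs_prob \<beta> \<gamma> lam V E (\<lambda>S. r \<notin> S) = Z_root (V, E, r) False / Zpart \<beta> \<gamma> lam V E"
    unfolding gibbs_prob_def filter by (simp_all add: Z_on_def)
  have Zp_pos: "0 < Zpart \<beta> \<gamma> lam V E"
    using Zp pos by simp
  have cond: "(\<Sum>S\<in>{S \<in> Pow V. P S}. real (card S) * (weight \<beta> \<gamma> lam E S / Zpart \<beta> \<gamma> lam V E))
      = N_on V E P / Zpart \<beta> \<gamma> lam V E" for P
    unfolding filter N_on_def sum_divide_distrib by (intro sum.cong refl) simp
  show "gibbs_cond_exp \<beta> \<gamma> lam V E (\<lambda>S. real (card S)) (\<lambda>S. r \<in> S) = N_root (V, E, r) True / Z_root (V, E, r) True"
    "gibbs_cond_exp \<beta> \<gamma> lam V E (\<lambda>S. real (card S)) (\<lambda>S. r \<notin> S) = N_root (V, E, r) False / Z_root (V, E, r) False"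
    using Zp_pos pos unfolding gibbs_cond_exp_def p1 p0 cond by simp_all
qed

lemma eff_field_eq:
  assumes "rooted T"
  shows "eff_field \<beta> \<gamma> lam T = spin_ratio (Z_root T) / lam"
proof (cases T)
  case (fields V E r)
  then have rT: "rooted (V, E, r)"
    using assms by simp
  have "0 < Zpart \<beta> \<gamma> lam V E"
    using Z_root_pos[OF rT, of True] Z_root_pos[OF rT, of False] by (simp only: gibbs_sums(1)[OF rT])
  then show ?thesis
    using Z_root_pos[OF rT, of False] by (simp add: fields eff_field_def gibbs_sums[OF rT] spin_ratio_def)
qed

lemma mag_gap_eq: "rooted T \<Longrightarrow> mag_gap \<beta> \<gamma> lam T = spin_gap (Z_root T) (N_root T)"
  by (cases T) (simp add: mag_gap_def gibbs_sums spin_gap_def)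

lemma eff_field_pos: "rooted T \<Longrightarrow> 0 < eff_field \<beta> \<gamma> lam T"
  using Z_root_pos[of T True] Z_root_pos[of T False] lam_pos by (simp add: eff_field_eq spin_ratio_def)

definition field_twins :: "rgraph \<Rightarrow> rgraph \<Rightarrow> bool" where
  "field_twins T T' \<longleftrightarrow> eff_field \<beta> \<gamma> lam T = eff_field \<beta> \<gamma> lam T' \<and> mag_gap \<beta> \<gamma> lam T \<noteq> mag_gap \<beta> \<gamma> lam T'"

lemma field_twins_transfer:
  assumes T: "rooted T" "rooted T'" and U: "rooted U" "rooted U'"
    and Z: "Z_root U = mat2_app A (Z_root T)" "Z_root U' = mat2_app A (Z_root T')"
    and N: "N_root U = (\<lambda>s. mat2_app A (N_root T) s + mat2_app B (Z_root T) s)"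
      "N_root U' = (\<lambda>s. mat2_app A (N_root T') s + mat2_app B (Z_root T') s)"
    and det: "det2 A \<noteq> 0" and twins: "field_twins T T'"
  shows "field_twins U U'"
proof -
  have ratio: "spin_ratio (Z_root T) = spin_ratio (Z_root T')" and gap: "spin_gap (Z_root T) (N_root T) \<noteq> spin_gap (Z_root T') (N_root T')"
    using T twins lam_pos by (simp_all add: field_twins_def eff_field_eq mag_gap_eq)
  have AZ: "0 < mat2_app A (Z_root T) s" for s
    using Z_root_pos[OF U(1), of s] Z(1) by simp
  note transfer = spin_gap_transfer(1)[OF Z_root_pos[OF T(1)] Z_root_pos[OF T(2)] AZ ratio det gap]
    spin_gap_transfer(2)[OF Z_root_pos[OF T(1)] Z_root_pos[OF T(2)] AZ ratio det gap, of B]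
  from transfer show ?thesis
    using T U lam_pos unfolding field_twins_def eff_field_eq[OF U(1)] eff_field_eq[OF U(2)]
      mag_gap_eq[OF U(1)] mag_gap_eq[OF U(2)] Z N by simp
qed

lemma field_twins_new_root:
  assumes "rooted T" "rooted T'" "field_twins T T'"
  shows "field_twins (new_root T) (new_root T')"
proof (rule field_twins_transfer[OF assms(1,2) rooted_new_root[OF assms(1)] rooted_new_root[OF assms(2)]])
  let ?A = "\<lambda>s t. (if s then lam else 1) * spin_factor s t"
  let ?B = "\<lambda>s t. (if s then lam else 0) * spin_factor s t"
  show "Z_root (new_root T) = mat2_app ?A (Z_root T)" "Z_root (new_root T') = mat2_app ?A (Z_root T')"
    "N_root (new_root T) = (\<lambda>s. mat2_app ?A (N_root T) s + mat2_app ?B (Z_root T) s)"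
    "N_root (new_root T') = (\<lambda>s. mat2_app ?A (N_root T') s + mat2_app ?B (Z_root T') s)"
    using assms by (simp_all add: fun_eq_iff Z_root_new_root mat2_app_def algebra_simps)
  have "\<gamma> * \<beta> < 1"
    using beta_gamma_less_1 by (simp add: mult.commute)
  then show "det2 ?A \<noteq> 0"
    using lam_pos by (simp add: det2_def spin_factor_def)
qed (rule assms(3))

lemma branch_Z_pos: "0 < branch_Z s"
proof (cases special)
  case True
  have d: "distinct [0, 1, 2 :: nat]"
    by simp
  have "0 < triangle_Z s"
    using Z_root_pos[OF rooted_triangle[OF d], of s] by (simp only: Z_root_triangle(1)[OF d])
  then show ?thesis
    using True by (simp add: branch_Z_def)
next
  case False
  then show ?thesis
    using lam_pos by (simp add: branch_Z_def)
qed

lemma field_twins_add_branch: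
  assumes "rooted T" "rooted T'" "field_twins T T'"
  shows "field_twins (add_branch T) (add_branch T')"
proof (rule field_twins_transfer[OF assms(1,2) Z_root_add_branch(1)[OF assms(1)] Z_root_add_branch(1)[OF assms(2)]])
  let ?A = "\<lambda>s t. if s = t then mat2_app spin_factor branch_Z s else 0"
  let ?B = "\<lambda>s t. if s = t then mat2_app spin_factor branch_N s else 0"
  show "Z_root (add_branch T) = mat2_app ?A (Z_root T)" "Z_root (add_branch T') = mat2_app ?A (Z_root T')"
    "N_root (add_branch T) = (\<lambda>s. mat2_app ?A (N_root T) s + mat2_app ?B (Z_root T) s)"
    "N_root (add_branch T') = (\<lambda>s. mat2_app ?A (N_root T') s + mat2_app ?B (Z_root T') s)"
    using assms by (simp_all add: fun_eq_iff Z_root_add_branch mat2_app_def)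
  have "0 < mat2_app spin_factor branch_Z True" "0 < mat2_app spin_factor branch_Z False"
    using branch_Z_pos by (rule mat2_app_spin_factor_pos)+
  then show "det2 ?A \<noteq> 0"
    by (simp add: det2_def)
qed (rule assms(3))

definition field_map :: "real \<Rightarrow> real" where
  "field_map x = (\<gamma> * lam * x + 1) / (lam * x + \<beta>)"

definition branch_factor :: real where
  "branch_factor = spin_ratio (mat2_app spin_factor branch_Z)"

lemma eff_field_new_root:
  assumes "rooted T"
  shows "eff_field \<beta> \<gamma> lam (new_root T) = field_map (eff_field \<beta> \<gamma> lam T)"
proof -
  define z1 z0 where "z1 = Z_root T True" and "z0 = Z_root T False"
  have pos: "0 < z1" "0 < z0"
    using Z_root_pos[OF assms] unfolding z1_def z0_def by auto
  moreover have "0 \<le> \<beta> * z0"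
    using pos beta_nonneg by simp
  ultimately have "0 < z1 + \<beta> * z0"
    by linarith
  have "eff_field \<beta> \<gamma> lam (new_root T) = (\<gamma> * z1 + z0) / (z1 + \<beta> * z0)"
    using lam_pos by (simp add: eff_field_eq rooted_new_root assms Z_root_new_root spin_ratio_def
        mat2_app_def spin_factor_def z1_def z0_def)
  also have "\<dots> = ((\<gamma> * z1 + z0) / z0) / ((z1 + \<beta> * z0) / z0)"
    using pos by simp
  also have "\<dots> = (\<gamma> * (z1 / z0) + 1) / (z1 / z0 + \<beta>)"
    using pos by (simp add: add_divide_distrib)
  also have "\<dots> = field_map (z1 / (lam * z0))"
    using lam_pos by (simp add: field_map_def mult.assoc)
  moreover have "eff_field \<beta> \<gamma> lam T = z1 / (lam * z0)"
    using assms pos lam_pos by (simp add: eff_field_eq spin_ratio_def z1_def z0_def field_simps)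
  ultimately show ?thesis
    by simp
qed

lemma eff_field_add_branch:
  assumes "rooted T"
  shows "eff_field \<beta> \<gamma> lam (add_branch T) = branch_factor * eff_field \<beta> \<gamma> lam T"
  using assms by (simp add: eff_field_eq Z_root_add_branch branch_factor_def spin_ratio_def)

lemma branch_factor_pos: "0 < branch_factor"
proof -
  have "0 < mat2_app spin_factor branch_Z True" "0 < mat2_app spin_factor branch_Z False"
    using branch_Z_pos by (rule mat2_app_spin_factor_pos)+
  then show ?thesis
    by (simp add: branch_factor_def spin_ratio_def)
qed

lemma triangle_Z_unbalanced:
  assumes "special"
  shows "(1 - \<beta>) * triangle_Z False \<noteq> (1 - \<gamma>) * triangle_Z True"
proof -
  have lam: "lam = (1 - \<beta>) / (1 - \<gamma>)" and "\<beta> \<noteq> \<gamma>"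
    using assms by (simp_all add: special_def)
  define d where "d = 1 - \<gamma>"
  have "d \<noteq> 0"
    using lam lam_pos by (auto simp: d_def)
  then have \<beta>: "\<beta> = 1 - lam * d" and \<gamma>: "\<gamma> = 1 - d"
    using lam by (simp_all add: d_def field_simps)
  then have "lam \<noteq> 1"
    using \<open>\<beta> \<noteq> \<gamma>\<close> by auto
  have "(1 - \<beta>) * triangle_Z False - (1 - \<gamma>) * triangle_Z True = lam ^ 3 * d ^ 4 * (1 - lam)"
    unfolding triangle_Z_def by (simp add: \<beta> \<gamma> power2_eq_square power3_eq_cube power4_eq_xxxx algebra_simps)
  moreover have "lam ^ 3 * d ^ 4 * (1 - lam) \<noteq> 0"
    using \<open>d \<noteq> 0\<close> \<open>lam \<noteq> 1\<close> lam_pos by simp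
  ultimately show ?thesis
    by (metis eq_iff_diff_eq_0)
qed

lemma leaf_unbalanced:
  assumes "\<not> special" and nontrivial: "\<not> (\<gamma> = \<beta> \<and> lam = 1)"
  shows "1 - \<beta> \<noteq> (1 - \<gamma>) * lam"
proof
  assume eq: "1 - \<beta> = (1 - \<gamma>) * lam"
  show False
  proof (cases "\<gamma> = 1")
    case True
    then show False
      using eq beta_gamma_less_1 by simp
  next
    case False
    then have "\<beta> = \<gamma>"
      using eq \<open>\<not> special\<close> by (auto simp: special_def field_simps)
    then have "(1 - \<gamma>) * (lam - 1) = 0"
      using eq by (simp add: algebra_simps)
    then show False
      using False nontrivial \<open>\<beta> = \<gamma>\<close> by simp
  qed
qed

lemma branch_factor_ne_1:
  assumes "\<not> (\<gamma> = \<beta> \<and> lam = 1)"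
  shows "branch_factor \<noteq> 1"
proof -
  have "0 < mat2_app spin_factor branch_Z False"
    using branch_Z_pos by (rule mat2_app_spin_factor_pos)
  then have "branch_factor = 1 \<longleftrightarrow> (1 - \<beta>) * branch_Z False = (1 - \<gamma>) * branch_Z True"
    by (auto simp: branch_factor_def spin_ratio_def mat2_app_def spin_factor_def algebra_simps)
  then show ?thesis
    using triangle_Z_unbalanced leaf_unbalanced[OF _ assms] by (auto simp: branch_Z_def)
qed

lemma field_map_pos: "0 < x \<Longrightarrow> 0 < field_map x"
  using beta_nonneg gamma_nonneg lam_pos unfolding field_map_def
  by (intro divide_pos_pos add_nonneg_pos add_pos_nonneg) auto

lemma field_map_less:
  assumes "0 < x" "x < y"
  shows "field_map y < field_map x"
proof -
  have pos: "0 < lam * x + \<beta>" "0 < lam * y + \<beta>"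
    using assms lam_pos beta_nonneg by (auto intro: add_pos_nonneg)
  have "0 < lam * (y - x) * (1 - \<gamma> * \<beta>)"
    using assms lam_pos beta_gamma_less_1 by (simp add: mult.commute)
  moreover have "(\<gamma> * lam * x + 1) * (lam * y + \<beta>) - (\<gamma> * lam * y + 1) * (lam * x + \<beta>)
      = lam * (y - x) * (1 - \<gamma> * \<beta>)"
    by (simp add: algebra_simps)
  ultimately show ?thesis
    using pos unfolding field_map_def by (simp add: divide_less_eq less_divide_eq)
qed

lemma field_map_twice: "(field_map ^^ 2) x = field_map (field_map x)"
  by (simp add: numeral_2_eq_2)

lemma field_map_two_cycle:
  assumes x: "0 < x" and cycle: "field_map (field_map x) = x"
  shows "field_map x = x"
proof -
  define z where "z = field_map x"
  have z: "0 < z"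
    using field_map_pos[OF x] by (simp add: z_def)
  have "lam * x + \<beta> \<noteq> 0" "lam * z + \<beta> \<noteq> 0"
    using x z lam_pos beta_nonneg by (auto intro!: less_imp_neq[symmetric] add_pos_nonneg)
  moreover have "field_map z = x"
    using cycle by (simp add: z_def)
  ultimately have "z * (lam * x + \<beta>) = \<gamma> * lam * x + 1" "x * (lam * z + \<beta>) = \<gamma> * lam * z + 1"
    unfolding z_def field_map_def by (simp_all add: divide_eq_eq)
  then have "(\<beta> + \<gamma> * lam) * (z - x) = 0"
    by (simp add: algebra_simps)
  moreover have "0 < \<beta> + \<gamma> * lam"
    using beta_nonneg gamma_nonneg beta_or_gamma_pos lam_pos by (auto intro: add_pos_nonneg add_nonneg_pos)
  ultimately show ?thesis
    by (simp add: z_def)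
qed

lemma strict_mono_on_field_map_twice: "strict_mono_on {0<..} (field_map ^^ 2)"
  by (rule strict_mono_onI) (simp add: field_map_twice field_map_less field_map_pos)

lemma field_map_shift_moves:
  assumes x: "0 < x" and fixed: "field_map x = x" and c: "0 < c" "c \<noteq> 1"
  shows "field_map (field_map (c * x)) \<noteq> field_map (c * x)"
proof
  assume "field_map (field_map (c * x)) = field_map (c * x)"
  have cx: "0 < c * x"
    using c x by simp
  have "field_map (c * x) = x"
  proof (rule ccontr)
    assume "field_map (c * x) \<noteq> x"
    then consider "field_map (c * x) < x" | "x < field_map (c * x)"
      by linarith
    then show False
      using field_map_less[OF field_map_pos[OF cx]] field_map_less[OF x] fixed
        \<open>field_map (field_map (c * x)) = field_map (c * x)\<close>
      by cases fastforce+
  qed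
  then have "c * x = x"
    using field_map_less[OF cx] field_map_less[OF x] fixed by (metis linorder_neq_iff)
  then show False
    using c x by simp
qed

lemma iterate_new_root:
  assumes D: "2 \<le> D" and T: "bounded_gadget D T" "bounded_gadget D T'" and twins: "field_twins T T'"
  shows "bounded_gadget D ((new_root ^^ n) T) \<and> bounded_gadget D ((new_root ^^ n) T')
    \<and> field_twins ((new_root ^^ n) T) ((new_root ^^ n) T')
    \<and> eff_field \<beta> \<gamma> lam ((new_root ^^ n) T) = (field_map ^^ n) (eff_field \<beta> \<gamma> lam T)"
proof (induction n)
  case 0
  then show ?case
    using T twins by simp
next
  case (Suc n)
  then have "rooted ((new_root ^^ n) T)" "rooted ((new_root ^^ n) T')"
    using bounded_gadget_rooted by blast+
  then show ?case
    using Suc D bounded_gadget_new_root' field_twins_new_root eff_field_new_root by simp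
qed

lemma exists_twins_off_fixed_point:
  assumes D: "3 \<le> D" and nontrivial: "\<not> (\<gamma> = \<beta> \<and> lam = 1)"
    and T: "bounded_gadget D T" "bounded_gadget D T'" and twins: "field_twins T T'"
  obtains S S' where "bounded_gadget D S" "bounded_gadget D S'" "field_twins S S'"
    "field_map (eff_field \<beta> \<gamma> lam S) \<noteq> eff_field \<beta> \<gamma> lam S"
proof (cases "field_map (eff_field \<beta> \<gamma> lam T) = eff_field \<beta> \<gamma> lam T")
  case False
  then show ?thesis
    using that T twins by blast
next
  case True
  let ?shift = "\<lambda>U. new_root (add_branch (new_root U))"
  have rooted: "rooted U \<Longrightarrow> rooted (add_branch (new_root U))" for U
    by (intro Z_root_add_branch(1) rooted_new_root)
  have rT: "rooted T" "rooted T'"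
    using T by (simp_all add: bounded_gadget_rooted)
  have "field_twins (?shift T) (?shift T')"
    using rT twins rooted by (intro field_twins_new_root field_twins_add_branch) (simp_all add: rooted_new_root)
  moreover have "eff_field \<beta> \<gamma> lam (?shift T) = field_map (branch_factor * eff_field \<beta> \<gamma> lam T)"
    using rT True rooted by (simp add: eff_field_new_root eff_field_add_branch rooted_new_root)
  moreover have "field_map (field_map (branch_factor * eff_field \<beta> \<gamma> lam T))
      \<noteq> field_map (branch_factor * eff_field \<beta> \<gamma> lam T)"
    using eff_field_pos[OF rT(1)] True branch_factor_pos branch_factor_ne_1[OF nontrivial]
    by (rule field_map_shift_moves)
  ultimately show ?thesis
    using that[of "?shift T" "?shift T'"] bounded_gadget_shift T D by simp
qed

end

theorem lemma2p8:
  fixes \<Delta> :: nat and \<beta> \<gamma> lam :: real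
  assumes "\<Delta> \<ge> 3"
    and "antiferromagnetic \<beta> \<gamma>"
    and "lam > 0"
    and "\<not> (\<gamma> = \<beta> \<and> lam = 1)"
    and "\<exists>T1 T2. field_gadget \<beta> \<gamma> lam T1 \<and> field_gadget \<beta> \<gamma> lam T2 \<and>
           gadget_max_degree_le T1 \<Delta> \<and> gadget_max_degree_le T2 \<Delta> \<and>
           eff_field \<beta> \<gamma> lam T1 = eff_field \<beta> \<gamma> lam T2 \<and>
           mag_gap \<beta> \<gamma> lam T1 \<noteq> mag_gap \<beta> \<gamma> lam T2"
  shows "\<exists>T1s T2s :: nat \<Rightarrow> rgraph.
           (\<forall>j. field_gadget \<beta> \<gamma> lam (T1s j) \<and> field_gadget \<beta> \<gamma> lam (T2s j) \<and>
                gadget_max_degree_le (T1s j) \<Delta> \<and> gadget_max_degree_le (T2s j) \<Delta> \<and>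
                eff_field \<beta> \<gamma> lam (T1s j) = eff_field \<beta> \<gamma> lam (T2s j) \<and>
                mag_gap \<beta> \<gamma> lam (T1s j) \<noteq> mag_gap \<beta> \<gamma> lam (T2s j)) \<and>
           inj (\<lambda>j. eff_field \<beta> \<gamma> lam (T1s j))"
proof -
  interpret antiferro_system \<beta> \<gamma> lam
    using assms(2,3) by unfold_locales
  obtain T1 T2 where "bounded_gadget \<Delta> T1" "bounded_gadget \<Delta> T2" "field_twins T1 T2"
    using assms(5) unfolding bounded_gadget_def field_twins_def by blast
  then obtain S1 S2 where S: "bounded_gadget \<Delta> S1" "bounded_gadget \<Delta> S2" "field_twins S1 S2"
    and moves: "field_map (eff_field \<beta> \<gamma> lam S1) \<noteq> eff_field \<beta> \<gamma> lam S1"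
    using exists_twins_off_fixed_point[OF assms(1,4)] by metis
  \<comment> \<open>only the even iterates of the decreasing field map are monotone\<close>
  define T1s T2s where "T1s j = (new_root ^^ (2 * j)) S1" and "T2s j = (new_root ^^ (2 * j)) S2" for j
  have seq: "bounded_gadget \<Delta> (T1s j) \<and> bounded_gadget \<Delta> (T2s j) \<and> field_twins (T1s j) (T2s j)
      \<and> eff_field \<beta> \<gamma> lam (T1s j) = ((field_map ^^ 2) ^^ j) (eff_field \<beta> \<gamma> lam S1)" for j
    using iterate_new_root[OF _ S, of "2 * j"] assms(1) by (simp add: T1s_def T2s_def funpow_mult)
  have "inj (\<lambda>j. ((field_map ^^ 2) ^^ j) (eff_field \<beta> \<gamma> lam S1))"
  proof (rule inj_iterates_strict_mono_on[OF strict_mono_on_field_map_twice])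
    show "(field_map ^^ 2) ` {0<..} \<subseteq> {0<..}"
      by (auto simp: field_map_twice field_map_pos)
    show "eff_field \<beta> \<gamma> lam S1 \<in> {0<..}"
      using S(1) by (simp add: bounded_gadget_rooted eff_field_pos)
    show "(field_map ^^ 2) (eff_field \<beta> \<gamma> lam S1) \<noteq> eff_field \<beta> \<gamma> lam S1"
      using moves field_map_two_cycle S(1) by (auto simp: field_map_twice bounded_gadget_rooted eff_field_pos)
  qed
  moreover have "eff_field \<beta> \<gamma> lam (T1s j) = ((field_map ^^ 2) ^^ j) (eff_field \<beta> \<gamma> lam S1)" for j
    using seq by blast
  ultimately have "inj (\<lambda>j. eff_field \<beta> \<gamma> lam (T1s j))"
    by simp
  then show ?thesis
    using seq unfolding bounded_gadget_def field_twins_def by blast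
qed

end
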